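(* Consider the ring network, traffic model and shortest-path routing described in the context, and fix a wavelength $\lambda\in\{1,\ldots,\Lambda\}$. For every $n\in\{0,\ldots,N-1\}$, \[ \mathbb{P}\big(\overset{\curvearrowright}{n}_{\lambda}\big)=\mathbb{P}\big(\overset{\curvearrowright}{(\lceil n\rceil_{\lambda})}_{\lambda}\big)-\mathbb{P}\big(S\in\{n,\ldots,\lceil n\rceil_{\lambda}-1\},\ \mathcal{G}_{\lambda}\neq S\big), \] where $\lceil n\rceil_\lambda:=\left\lceil \frac{n-\lambda}{\Lambda}\right\rceil\Lambda+\lambda$ (node and segment indices modulo $N$; the set $\{n,\ldots,\lceil n\rceil_\lambda-1\}$ is empty if $n=\lceil n\rceil_\lambda$). In particular, the utilization of any segment on $\lambda$ is at most that of the segment $u_{\lceil n\rceil_\lambda}$ leading into the next node homed on $\lambda$.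
   Context: Network: a bidirectional ring with $N$ nodes labeled $1,\ldots,N$ in clockwise order; node labels are taken modulo $N$, so node $N$ is also called node $0$. There are $\Lambda$ wavelength channels $1,\ldots,\Lambda$ in each ring direction, and $\eta:=N/\Lambda$ is a positive integer. Node $n$ receives (is homed) on wavelength $\lambda$ iff $n\in\mathcal{M}_\lambda:=\{\lambda+k\Lambda: k=0,\ldots,\eta-1\}$. For $1\le n\le N$, $u_n$ denotes the clockwise ring segment from node $n-1$ to node $n$. Node $N$ is the hotspot. Traffic: each packet has a sender $S$ and a destination (fanout) set $\mathcal{F}\subset\{1,\ldots,N\}\setminus\{S\}$, generated as follows, with $\alpha,\beta,\gamma\ge 0$, $\alpha+\beta+\gamma=1$. With probability $\alpha$ (uniform traffic): $S$ is uniform on $\{1,\ldots,N\}$, a fanout $l\in\{1,\ldots,N-1\}$ is drawn from a distribution $(\mu_l)$, and $\mathcal{F}$ is uniform among $l$-subsets of $\{1,\ldots,N\}\setminus\{S\}$. With probability $\beta$ (hotspot destination traffic): $S$ is uniform on $\{1,\ldots,N-1\}$, $l$ is drawn from $(\nu_l)$, and $\mathcal{F}=\mathcal{F}'\cup\{N\}$ with $\mathcal{F}'$ uniform among $(l-1)$-subsets of $\{1,\ldots,N-1\}\setminus\{S\}$. With probability $\gamma$ (hotspot source traffic): $S=N$, $l$ is drawn from $(\kappa_l)$, and $\mathcal{F}$ is uniform among $l$-subsets of $\{1,\ldots,N-1\}$. $\mathbb{P}$ denotes the probability measure of this model. Shortest-path routing on wavelength $\lambda$: let $\mathcal{F}_\lambda:=\mathcal{F}\cap\mathcal{M}_\lambda$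 and $\mathcal{A}_\lambda:=\mathcal{F}_\lambda\cup\{S\}$. The "gaps" are the clockwise arcs between cyclically consecutive nodes of $\mathcal{A}_\lambda$ (if $\mathcal{A}_\lambda=\{X_1<\dots<X_{\ell+1}\}$, their lengths are $X_1+N-X_{\ell+1}$ and $X_{i}-X_{i-1}$). A largest gap is chosen, uniformly at random among ties ($CLG_\lambda$), and $\mathcal{G}_\lambda\in\{0,\ldots,N-1\}$ denotes the node at which $CLG_\lambda$ starts (clockwise). The packet is sent on $\lambda$ from $S$ clockwise up to $\mathcal{G}_\lambda$ and counterclockwise up to the node ending $CLG_\lambda$, so exactly the segments outside $CLG_\lambda$ are traversed. The event $\overset{\curvearrowright}{n}_{\lambda}$ means that segment $u_n$ is traversed clockwise on wavelength $\lambda$, i.e., $u_n$ lies on the clockwise arc from $S$ to $\mathcal{G}_\lambda$. *)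

theory Defs
  imports "HOL-Probability.Probability"
begin

text \<open>Nodes are labelled 1..N for senders/destinations; residues mod N are used for
ring positions (node N = node 0). L is the number of wavelengths, lam a wavelength.\<close>

definition fanout_sets :: "nat set \<Rightarrow> nat \<Rightarrow> nat set set" where
  "fanout_sets U l = {A. A \<subseteq> U \<and> card A = l}"

text \<open>Packet (sender, fanout set) distribution: mixture of uniform, hotspot-destination
and hotspot-source traffic with weights alpha, beta, gamma.\<close>
definition packet_pmf ::
  "nat \<Rightarrow> real \<Rightarrow> real \<Rightarrow> real \<Rightarrow> nat pmf \<Rightarrow> nat pmf \<Rightarrow> nat pmf \<Rightarrow> (nat \<times> nat set) pmf" where
  "packet_pmf N \<alpha> \<beta> \<gamma> \<mu> \<nu> \<kappa> =
     bind_pmf (embed_pmf (\<lambda>i::nat. if i = 0 then \<alpha> else if i = 1 then \<beta> else if i = 2 then \<gamma> else 0))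
       (\<lambda>t. if t = 0 then
              bind_pmf (pmf_of_set {1..N}) (\<lambda>S. bind_pmf \<mu> (\<lambda>l.
                map_pmf (\<lambda>F. (S, F)) (pmf_of_set (fanout_sets ({1..N} - {S}) l))))
            else if t = 1 then
              bind_pmf (pmf_of_set {1..N-1}) (\<lambda>S. bind_pmf \<nu> (\<lambda>l.
                map_pmf (\<lambda>F'. (S, insert N F')) (pmf_of_set (fanout_sets ({1..N-1} - {S}) (l - 1)))))
            else
              bind_pmf \<kappa> (\<lambda>l. map_pmf (\<lambda>F. (N, F)) (pmf_of_set (fanout_sets {1..N-1} l))))"

definition homed :: "nat \<Rightarrow> nat \<Rightarrow> nat \<Rightarrow> nat set" where
  "homed N L lam = {lam + k * L | k. k < N div L}"

definition A_res :: "nat \<Rightarrow> nat \<Rightarrow> nat \<Rightarrow> nat \<Rightarrow> nat set \<Rightarrow> nat set" where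
  "A_res N L lam S F = (\<lambda>y. y mod N) ` (insert S (F \<inter> homed N L lam))"

definition gaplen :: "nat \<Rightarrow> nat set \<Rightarrow> nat \<Rightarrow> nat" where
  "gaplen N A x = (LEAST d. 0 < d \<and> (x + d) mod N \<in> A)"

definition largest_gaps :: "nat \<Rightarrow> nat set \<Rightarrow> nat set" where
  "largest_gaps N A = {x \<in> A. \<forall>y\<in>A. gaplen N A y \<le> gaplen N A x}"

definition route_pmf :: "nat \<Rightarrow> nat \<Rightarrow> nat \<Rightarrow> (nat \<times> nat set) pmf \<Rightarrow> (nat \<times> nat set \<times> nat) pmf" where
  "route_pmf N L lam P = bind_pmf P (\<lambda>(S, F).
      map_pmf (\<lambda>G. (S, F, G)) (pmf_of_set (largest_gaps N (A_res N L lam S F))))"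

text \<open>Segment u_n (from node n-1 to n, indices mod N) lies on the clockwise arc from S to G.\<close>
definition cw :: "nat \<Rightarrow> nat \<Rightarrow> nat \<Rightarrow> int \<Rightarrow> bool" where
  "cw N S G n \<longleftrightarrow> (let d = (n - int S) mod int N in 0 < d \<and> d \<le> (int G - int S) mod int N)"

definition ceil_node :: "nat \<Rightarrow> nat \<Rightarrow> int \<Rightarrow> int" where
  "ceil_node L lam n = \<lceil>(real_of_int n - real lam) / real L\<rceil> * int L + int lam"

end

theory Submission imports Defs begin

text \<open>Measure positions on the ring by their clockwise offset from the sender S. The segment
into position x is traversed clockwise iff the offset of x lies in (0, g], where g is the offset
of the end point G of the clockwise route. If G \<noteq> S, then G is homed on the wavelength, and so
is the position c = ceil(n) = n + r with 0 \<le> r < L; as L divides N, none of the positions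
n, \<dots>, c - 1 can be G. Hence walking from n to c the indicator of clockwise traversal can change
only where the walk passes the sender, and there it switches on. Pointwise, the event for u_c
is the disjoint union of the event for u_n and the event that S \<in> {n, \<dots>, c - 1} with G \<noteq> S;
taking probabilities gives the identity.\<close>

lemma dvd_nonneg_if_gt_neg:
  fixes L x :: int assumes "L dvd x" "- L < x" shows "0 \<le> x"
proof (rule ccontr)
  assume "\<not> 0 \<le> x"
  then have "L \<le> - x" using assms(1) by (intro zdvd_imp_le) auto
  then show False using assms(2) by simp
qed

lemma ceil_node_eq:
  fixes L lam :: nat and n :: int assumes "0 < L"
  shows "ceil_node L lam n = n + (int lam - n) mod int L"
proof -
  define z where "z = - ((int lam - n) div int L)"
  define r where "r = (int lam - n) mod int L"
  have zr: "real_of_int z * real L = real_of_int n - real lam + real_of_int r"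
  proof -
    have "z * int L = n - int lam + r"
      using div_mult_mod_eq[of "int lam - n" "int L"] unfolding z_def r_def by linarith
    then show ?thesis by (metis of_int_add of_int_diff of_int_mult of_int_of_nat_eq)
  qed
  have r: "0 \<le> r" "r < int L" using assms unfolding r_def by auto
  have "\<lceil>(real_of_int n - real lam) / real L\<rceil> = z"
  proof (rule ceiling_unique)
    have "(real_of_int n - real lam) / real L = real_of_int z - real_of_int r / real L"
      using zr assms by (simp add: field_simps)
    moreover have "0 \<le> real_of_int r / real L" "real_of_int r / real L < 1" using r assms by auto
    ultimately show "real_of_int z - 1 < (real_of_int n - real lam) / real L"
      and "(real_of_int n - real lam) / real L \<le> real_of_int z" by auto
  qed
  then show ?thesis unfolding ceil_node_def r_def z_def
    using div_mult_mod_eq[of "int lam - n" "int L"] by (simp add: algebra_simps)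
qed

lemma mod_in_image_interval_iff:
  fixes n S N r :: int assumes N: "0 < N" and r: "0 \<le> r" "r < N"
  shows "S mod N \<in> (\<lambda>k. k mod N) ` {n..n + r - 1} \<longleftrightarrow>
         0 < r \<and> ((n - S) mod N = 0 \<or> N < (n - S) mod N + r)"
proof -
  define D where "D = (n - S) mod N"
  have D: "0 \<le> D" "D < N" "N dvd n - S - D" using N unfolding D_def by (auto simp: mod_eq_dvd_iff)
  have "S mod N = k mod N \<longleftrightarrow> N dvd D + (k - n)" for k
  proof -
    have "N dvd D + (k - n) \<longleftrightarrow> N dvd (n - S - D) + (D + (k - n))"
      by (rule dvd_add_right_iff[OF D(3), symmetric])
    also have "(n - S - D) + (D + (k - n)) = k - S" by simp
    finally show ?thesis by (metis mod_eq_dvd_iff)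
  qed
  then have "S mod N \<in> (\<lambda>k. k mod N) ` {n..n + r - 1} \<longleftrightarrow> (\<exists>k\<in>{n..n + r - 1}. N dvd D + (k - n))"
    by auto
  also have "\<dots> \<longleftrightarrow> (\<exists>j\<in>{0..r - 1}. N dvd D + j)"
  proof
    assume "\<exists>k\<in>{n..n + r - 1}. N dvd D + (k - n)"
    then obtain k where "k \<in> {n..n + r - 1}" "N dvd D + (k - n)" ..
    then show "\<exists>j\<in>{0..r - 1}. N dvd D + j" by (intro bexI[of _ "k - n"]) auto
  next
    assume "\<exists>j\<in>{0..r - 1}. N dvd D + j"
    then obtain j where "j \<in> {0..r - 1}" "N dvd D + j" ..
    then show "\<exists>k\<in>{n..n + r - 1}. N dvd D + (k - n)" by (intro bexI[of _ "n + j"]) auto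
  qed
  also have "\<dots> \<longleftrightarrow> 0 < r \<and> (D = 0 \<or> N < D + r)"
  proof
    assume "\<exists>j\<in>{0..r - 1}. N dvd D + j"
    then obtain j where j: "0 \<le> j" "j < r" "N dvd D + j" by auto
    have "D = 0 \<or> N \<le> D + j" using j D by (auto intro: zdvd_imp_le)
    then show "0 < r \<and> (D = 0 \<or> N < D + r)" using j by auto
  next
    assume "0 < r \<and> (D = 0 \<or> N < D + r)"
    then show "\<exists>j\<in>{0..r - 1}. N dvd D + j"
      using D by (auto intro: bexI[of _ 0] bexI[of _ "N - D"])
  qed
  finally show ?thesis unfolding D_def .
qed

text \<open>D is the offset of n, g that of G and r = c - n; the last hypothesis says that G and c
are congruent modulo L.\<close>

lemma arc_offset_shift:
  fixes N L D g r :: int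
  assumes LN: "L dvd N" and L: "0 < L" and D: "0 \<le> D" "D < N" and g: "0 < g" "g < N"
    and r: "0 \<le> r" "r < L" and congr: "L dvd g - D - r"
  shows "0 < (D + r) mod N \<and> (D + r) mod N \<le> g \<longleftrightarrow> (0 < D \<and> D \<le> g) \<or> (0 < r \<and> (D = 0 \<or> N < D + r))"
    and "\<not> ((0 < D \<and> D \<le> g) \<and> 0 < r \<and> (D = 0 \<or> N < D + r))"
proof -
  have "L \<le> N" using LN L D by (auto intro: zdvd_imp_le)
  have before_g: "D + r \<le> g" if "D \<le> g"
    using dvd_nonneg_if_gt_neg[OF congr] that r by linarith
  have wrapped: "D + r - N \<le> g"
    using dvd_nonneg_if_gt_neg[OF dvd_add[OF congr LN]] D g r by linarith
  have "(D + r) mod N = (if D + r < N then D + r else D + r - N)"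
  proof (cases "D + r < N")
    case False
    then have "(D + r) mod N = (D + r - N) mod N" using D by (intro mod_pos_geq) auto
    also have "\<dots> = D + r - N" using False D r \<open>L \<le> N\<close> by (intro mod_pos_pos_trivial) auto
    finally show ?thesis using False by simp
  qed (use D r in simp)
  then show "0 < (D + r) mod N \<and> (D + r) mod N \<le> g \<longleftrightarrow> (0 < D \<and> D \<le> g) \<or> (0 < r \<and> (D = 0 \<or> N < D + r))"
    and "\<not> ((0 < D \<and> D \<le> g) \<and> 0 < r \<and> (D = 0 \<or> N < D + r))"
    using before_g wrapped D g r \<open>L \<le> N\<close> by auto
qed

lemma A_res_finite: "finite (A_res N L lam S F)"
proof -
  have "homed N L lam = (\<lambda>k. lam + k * L) ` {..<N div L}" unfolding homed_def by auto
  then show ?thesis unfolding A_res_def by simp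
qed

lemma A_res_homed_dvd:
  assumes "L dvd N" and "G \<in> A_res N L lam S F" and "G \<noteq> S mod N"
  shows "int L dvd int G - int lam"
proof -
  obtain y where y: "G = y mod N" "y = S \<or> y \<in> homed N L lam"
    using assms(2) unfolding A_res_def by auto
  then obtain k where k: "y = lam + k * L" using assms(3) unfolding homed_def by auto
  have "int G - int lam = int k * int L - (int y - int y mod int N)"
    using y(1) k by (simp add: zmod_int)
  moreover have "int L dvd int N" using assms(1) by simp
  then have "int L dvd int y - int y mod int N" using dvd_minus_mod by (rule dvd_trans)
  ultimately show ?thesis by simp
qed

lemma dvd_mod_diff_mod_diff:
  fixes L N x y z :: int assumes "L dvd N"
  shows "L dvd (x mod N - y mod N - z mod L) - (x - y - z)"
proof -
  have "L dvd w mod N - w" for w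
    using assms dvd_minus_mod[of N w] by (metis dvd_diff_commute dvd_trans)
  moreover have "L dvd z mod L - z" by (metis dvd_diff_commute dvd_minus_mod)
  moreover have "(x mod N - y mod N - z mod L) - (x - y - z)
      = (x mod N - x) - (y mod N - y) - (z mod L - z)" by simp
  ultimately show ?thesis by (metis dvd_diff)
qed

lemma largest_gaps_nonempty:
  assumes "finite A" and "A \<noteq> {}" shows "largest_gaps N A \<noteq> {}"
proof -
  have "Max (gaplen N A ` A) \<in> gaplen N A ` A" using assms by simp
  then obtain x where "x \<in> A" "gaplen N A x = Max (gaplen N A ` A)" by auto
  then have "x \<in> largest_gaps N A" using assms unfolding largest_gaps_def by simp
  then show ?thesis by blast
qed

lemma set_pmf_route_pmf:
  assumes "(S, F, G) \<in> set_pmf (route_pmf N L lam P)" shows "G \<in> A_res N L lam S F"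
proof -
  have sub: "largest_gaps N A \<subseteq> A" for A unfolding largest_gaps_def by auto
  have "A_res N L lam S' F' \<noteq> {}" for S' F' unfolding A_res_def by simp
  then have "finite (largest_gaps N (A_res N L lam S' F'))"
    and "largest_gaps N (A_res N L lam S' F') \<noteq> {}" for S' F'
    using finite_subset[OF sub A_res_finite] largest_gaps_nonempty[OF A_res_finite] by auto
  then have "G \<in> largest_gaps N (A_res N L lam S F)"
    using assms unfolding route_pmf_def by auto
  then show ?thesis using sub by blast
qed

lemma cw_ceil_node_iff:
  fixes N L lam n S G :: nat and c :: int
  assumes L: "0 < L" and N: "0 < N" and LN: "L dvd N" and GA: "G \<in> A_res N L lam S F"
    and c_def: "c = ceil_node L lam (int n)"
  defines "passes \<equiv> int S mod int N \<in> (\<lambda>k. k mod int N) ` {int n..c - 1} \<and> G \<noteq> S mod N"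
  shows "cw N S G c \<longleftrightarrow> cw N S G (int n) \<or> passes" and "\<not> (cw N S G (int n) \<and> passes)"
proof -
  define D where "D = (int n - int S) mod int N"
  define g where "g = (int G - int S) mod int N"
  define r where "r = (int lam - int n) mod int L"
  have c: "c = int n + r" unfolding c_def r_def using L by (rule ceil_node_eq)
  have "L \<le> N" using LN N by (simp add: dvd_imp_le)
  have D: "0 \<le> D" "D < int N" and r: "0 \<le> r" "r < int L"
    using N L unfolding D_def r_def by auto
  have "G < N" using GA N unfolding A_res_def by auto
  have "g = 0 \<longleftrightarrow> int G mod int N = int S mod int N"
    unfolding g_def by (simp only: dvd_eq_mod_eq_0[symmetric] mod_eq_dvd_iff)
  with \<open>G < N\<close> have g0: "g = 0 \<longleftrightarrow> G = S mod N"
    by (simp flip: of_nat_mod)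
  have cw_n: "cw N S G (int n) \<longleftrightarrow> 0 < D \<and> D \<le> g"
    unfolding cw_def D_def g_def Let_def ..
  have "c - int S = int n - int S + r" using c by simp
  then have "(c - int S) mod int N = (D + r) mod int N"
    unfolding D_def by (simp only: mod_add_left_eq)
  then have cw_c: "cw N S G c \<longleftrightarrow> 0 < (D + r) mod int N \<and> (D + r) mod int N \<le> g"
    unfolding cw_def g_def Let_def by simp
  have range: "int S mod int N \<in> (\<lambda>k. k mod int N) ` {int n..c - 1} \<longleftrightarrow>
      0 < r \<and> (D = 0 \<or> int N < D + r)"
    unfolding c D_def using N r \<open>L \<le> N\<close> by (intro mod_in_image_interval_iff) auto
  have "(cw N S G c \<longleftrightarrow> cw N S G (int n) \<or> passes) \<and> \<not> (cw N S G (int n) \<and> passes)"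
  proof (cases "G = S mod N")
    case True
    then show ?thesis using g0 cw_n cw_c unfolding passes_def by auto
  next
    case False
    have g: "0 < g" "g < int N" using False g0 N unfolding g_def
      by (auto simp: order_le_neq_trans)
    have LN': "int L dvd int N" using LN by simp
    from dvd_add[OF dvd_mod_diff_mod_diff[OF LN', of "int G - int S" "int n - int S" "int lam - int n"]
        A_res_homed_dvd[OF LN GA False]]
    have "int L dvd g - D - r" unfolding g_def D_def r_def by simp
    note shift = arc_offset_shift[OF LN' _ D g r this]
    show ?thesis using shift L False unfolding cw_n cw_c passes_def range by auto
  qed
  then show "cw N S G c \<longleftrightarrow> cw N S G (int n) \<or> passes" and "\<not> (cw N S G (int n) \<and> passes)"
    by auto
qed

lemma measure_pmf_prob_split_on_support:
  assumes "\<And>x. x \<in> set_pmf p \<Longrightarrow> x \<in> C \<longleftrightarrow> x \<in> A \<or> x \<in> B"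
    and "\<And>x. x \<in> set_pmf p \<Longrightarrow> \<not> (x \<in> A \<and> x \<in> B)"
  shows "measure_pmf.prob p C = measure_pmf.prob p A + measure_pmf.prob p B"
proof -
  have "measure_pmf.prob p C = measure_pmf.prob p (C \<inter> set_pmf p)"
    by (simp add: measure_Int_set_pmf)
  also have "C \<inter> set_pmf p = (A \<inter> set_pmf p) \<union> (B \<inter> set_pmf p)" using assms(1) by blast
  also have "measure_pmf.prob p \<dots> = measure_pmf.prob p (A \<inter> set_pmf p) + measure_pmf.prob p (B \<inter> set_pmf p)"
    using assms(2) by (intro measure_pmf.finite_measure_Union) auto
  finally show ?thesis by (simp add: measure_Int_set_pmf)
qed

theorem corollary3p2:
  fixes N L lam n :: nat and \<alpha> \<beta> \<gamma> :: real and \<mu> \<nu> \<kappa> :: "nat pmf"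
  assumes "0 < L" and "0 < N" and "L dvd N" and "lam \<in> {1..L}"
    and "\<alpha> \<ge> 0" and "\<beta> \<ge> 0" and "\<gamma> \<ge> 0" and "\<alpha> + \<beta> + \<gamma> = 1"
    and "set_pmf \<mu> \<subseteq> {1..N-1}" and "set_pmf \<nu> \<subseteq> {1..N-1}" and "set_pmf \<kappa> \<subseteq> {1..N-1}"
    and "n < N"
  defines "P \<equiv> route_pmf N L lam (packet_pmf N \<alpha> \<beta> \<gamma> \<mu> \<nu> \<kappa>)"
    and "c \<equiv> ceil_node L lam (int n)"
  shows "measure_pmf.prob P {(S, F, G). cw N S G (int n)}
           = measure_pmf.prob P {(S, F, G). cw N S G c}
             - measure_pmf.prob P {(S, F, G). int S mod int N \<in> (\<lambda>k. k mod int N) ` {int n..c - 1}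
                                              \<and> G \<noteq> S mod N}
         \<and> measure_pmf.prob P {(S, F, G). cw N S G (int n)} \<le> measure_pmf.prob P {(S, F, G). cw N S G c}"
proof -
  let ?B = "{(S, F, G). int S mod int N \<in> (\<lambda>k. k mod int N) ` {int n..c - 1} \<and> G \<noteq> S mod N}"
  have "measure_pmf.prob P {(S, F, G). cw N S G c}
      = measure_pmf.prob P {(S, F, G). cw N S G (int n)} + measure_pmf.prob P ?B"
  proof (rule measure_pmf_prob_split_on_support)
    fix x assume "x \<in> set_pmf P"
    then obtain S F G where x: "x = (S, F, G)" and "G \<in> A_res N L lam S F"
      unfolding P_def by (metis prod_cases3 set_pmf_route_pmf)
    from cw_ceil_node_iff[OF assms(1-3) this(2) c_def[THEN meta_eq_to_obj_eq]]
    show "x \<in> {(S, F, G). cw N S G c} \<longleftrightarrow> x \<in> {(S, F, G). cw N S G (int n)} \<or> x \<in> ?B"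
      and "\<not> (x \<in> {(S, F, G). cw N S G (int n)} \<and> x \<in> ?B)"
      unfolding x by auto
  qed
  then show ?thesis by simp
qed

end
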